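(* Assume that MSCQ holds for the system $G(z)\in K$ at $\bar z$, and let $v\in Z$ satisfy $\nabla G(\bar z)v\in K$. Then there is $\kappa>0$ with the following property. For every pair $(w,q)\in Z\times E$ with $$\nabla G(\bar z)w+\tfrac12\nabla^2G(\bar z)(v,v)+q\in T_K(\nabla G(\bar z)v)$$ there exists $\widetilde w\in Z$ such that $$\nabla G(\bar z)\widetilde w+\tfrac12\nabla^2G(\bar z)(v,v)\in T_K(\nabla G(\bar z)v)\quad\text{and}\quad \|\widetilde w-w\|\le\kappa\|q\|.$$ Equivalently, the mapping $\Theta\colon E\rightrightarrows Z$ defined by $\Theta(q):=\{w:\nabla G(\bar z)w+\frac12\nabla^2G(\bar z)(v,v)+q\in T_K(\nabla G(\bar z)v)\}$ satisfies $\Theta(q)\subset\Theta(0)+\kappa\|q\|{\cal B}_Z$ for all $q\in E$.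
   Context: Setting: $Z$ and $E$ are finite-dimensional spaces, $\bar z\in Z$, and $K\subset E$ is a closed convex cone. The map $G\colon Z\to E$ is $C^2$-smooth around $\bar z$ with $G(\bar z)=0$. (In the paper $Z=P\times X$ and $G=h\circ g$ is the reduction mapping of a $C^2$-cone reducible constraint system.) $\nabla^2G(\bar z)(v,v)$ is the second derivative of $G$ at $\bar z$ evaluated at $(v,v)$. For a closed set $\Omega$ and $\bar y\in\Omega$, the tangent cone is $T_\Omega(\bar y):=\{w:\exists\, t_k\downarrow0,\ w_k\to w \text{ with } \bar y+t_kw_k\in\Omega\}$. The system $G(z)\in K$ satisfies MSCQ at $\bar z$ if there is $\kappa'\ge0$ such that ${\rm dist}(z;G^{-1}(K))\le\kappa'\,{\rm dist}(G(z);K)$ for all $z$ near $\bar z$. ${\cal B}_Z$ is the closed unit ball. *)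

theory Defs
  imports "HOL-Analysis.Analysis"
begin

definition tangent_cone :: "'a::real_normed_vector set \<Rightarrow> 'a \<Rightarrow> 'a set" where
  "tangent_cone \<Omega> y = {w. \<exists>t wk. (\<forall>k. t k > 0) \<and> t \<longlonglongrightarrow> 0 \<and> wk \<longlonglongrightarrow> w
                          \<and> (\<forall>k. y + t k *\<^sub>R wk k \<in> \<Omega>)}"

definition MSCQ :: "('z::real_normed_vector \<Rightarrow> 'e::real_normed_vector) \<Rightarrow> 'e set \<Rightarrow> 'z \<Rightarrow> bool" where
  "MSCQ G K zbar \<longleftrightarrow> (\<exists>\<kappa>'\<ge>0. \<exists>\<epsilon>>0. \<forall>z\<in>ball zbar \<epsilon>.
       infdist z (G -` K) \<le> \<kappa>' * infdist (G z) K)"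

end

theory Submission
  imports Defs
begin

text \<open>Choose \<open>t\<^sub>k \<down> 0\<close> and \<open>d\<^sub>k \<rightarrow> \<nabla>G(zbar)w + \<onehalf>\<nabla>\<^sup>2G(zbar)(v,v) + q\<close> with
  \<open>\<nabla>G(zbar)v + t\<^sub>k d\<^sub>k \<in> K\<close>. By the second-order expansion of \<open>G\<close>, the point
  \<open>zbar + t\<^sub>k v + t\<^sub>k\<^sup>2 w\<close> misses the cone point \<open>t\<^sub>k(\<nabla>G(zbar)v + t\<^sub>k d\<^sub>k)\<close> by about \<open>t\<^sub>k\<^sup>2 \<parallel>q\<parallel>\<close>,
  so metric subregularity yields feasible points \<open>zbar + t\<^sub>k v + t\<^sub>k\<^sup>2 w\<^sub>k\<close> with
  \<open>\<parallel>w\<^sub>k - w\<parallel> \<le> \<kappa>'\<parallel>q\<parallel> + o(1)\<close>. A cluster point \<open>w'\<close> of \<open>w\<^sub>k\<close> satisfies the bound, and reading the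
  feasibility of these points through the same expansion, using only that \<open>K\<close> is a cone,
  exhibits \<open>\<nabla>G(zbar)w' + \<onehalf>\<nabla>\<^sup>2G(zbar)(v,v)\<close> as a tangent direction to \<open>K\<close> at \<open>\<nabla>G(zbar)v\<close>.\<close>

definition second_order_expansion ::
    "('z::real_normed_vector \<Rightarrow> 'e::real_normed_vector) \<Rightarrow> ('z \<Rightarrow>\<^sub>L 'e) \<Rightarrow> ('z \<Rightarrow>\<^sub>L ('z \<Rightarrow>\<^sub>L 'e)) \<Rightarrow> 'z \<Rightarrow> bool"
  where "second_order_expansion G A B z \<longleftrightarrow>
    (\<forall>e>0. \<exists>d>0. \<forall>h. norm h < d \<longrightarrow> norm (G (z + h) - G z - A h - (1/2) *\<^sub>R B h h) \<le> e * (norm h)\<^sup>2)"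

lemma has_derivative_imp_second_order_expansion:
  fixes G :: "'z::real_normed_vector \<Rightarrow> 'e::real_normed_vector"
  assumes "\<delta> > 0"
    and dG: "\<And>z. z \<in> ball z0 \<delta> \<Longrightarrow> (G has_derivative blinfun_apply (G' z)) (at z)"
    and dG': "(G' has_derivative blinfun_apply B) (at z0)"
  shows "second_order_expansion G (G' z0) B z0"
  unfolding second_order_expansion_def
proof (intro allI impI)
  fix e :: real assume "e > 0"
  then obtain d where "d > 0" and d: "\<And>y. norm (y - z0) < d \<Longrightarrow>
      norm (G' y - G' z0 - B (y - z0)) \<le> e * norm (y - z0)"
    using dG' unfolding has_derivative_at_alt by blast
  show "\<exists>d>0. \<forall>h. norm h < d \<longrightarrow> norm (G (z0 + h) - G z0 - G' z0 h - (1/2) *\<^sub>R B h h) \<le> e * (norm h)\<^sup>2"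
  proof (intro exI[of _ "min \<delta> d"] conjI allI impI)
    show "min \<delta> d > 0" using \<open>\<delta> > 0\<close> \<open>d > 0\<close> by simp
    fix h :: 'z assume h: "norm h < min \<delta> d"
    have short: "norm (s *\<^sub>R h) \<le> norm h" if "s \<in> {0..1}" for s
      using that by (auto simp: mult_left_le_one_le)
    \<comment> \<open>Mean value inequality on the segment from \<open>z0\<close> to \<open>z0 + h\<close>.\<close>
    define f where "f s = G (z0 + s *\<^sub>R h) - (s\<^sup>2/2) *\<^sub>R B h h" for s :: real
    define f' where "f' s = G' (z0 + s *\<^sub>R h) h - s *\<^sub>R B h h" for s :: real
    have "(f has_vector_derivative f' s) (at s within {0..1})" if "s \<in> {0..1}" for s
    proof -
      have "z0 + s *\<^sub>R h \<in> ball z0 \<delta>"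
        using short[OF that] h by (simp add: dist_norm)
      moreover have "((\<lambda>s. z0 + s *\<^sub>R h) has_derivative (\<lambda>x. x *\<^sub>R h)) (at s within {0..1})"
        by (auto intro!: derivative_eq_intros)
      ultimately have "((\<lambda>s. G (z0 + s *\<^sub>R h)) has_derivative (\<lambda>x. G' (z0 + s *\<^sub>R h) (x *\<^sub>R h))) (at s within {0..1})"
        using has_derivative_compose has_derivative_at_withinI dG by blast
      then have "(f has_derivative (\<lambda>x. G' (z0 + s *\<^sub>R h) (x *\<^sub>R h) - (x * s) *\<^sub>R B h h)) (at s within {0..1})"
        unfolding f_def by (auto intro!: derivative_eq_intros simp: power2_eq_square)
      then show ?thesis unfolding has_vector_derivative_def f'_def
        by (simp add: blinfun.scaleR_right scaleR_diff_right)
    qed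
    moreover have "norm (f' s - f' 0) \<le> e * (norm h)\<^sup>2" if "s \<in> {0..1}" for s
    proof -
      have "f' s - f' 0 = (G' (z0 + s *\<^sub>R h) - G' z0 - B (s *\<^sub>R h)) h"
        unfolding f'_def by (simp add: blinfun.diff_left blinfun.scaleR_left blinfun.scaleR_right)
      also have "norm \<dots> \<le> norm (G' (z0 + s *\<^sub>R h) - G' z0 - B (s *\<^sub>R h)) * norm h"
        by (rule norm_blinfun)
      also have "\<dots> \<le> (e * norm h) * norm h"
        using d[of "z0 + s *\<^sub>R h"] short[OF that] h \<open>e > 0\<close>
        by (intro mult_right_mono) (auto intro: order_trans)
      finally show ?thesis by (simp add: power2_eq_square)
    qed
    ultimately have "norm (f 1 - f 0 - (1 - 0) *\<^sub>R f' 0) \<le> norm (1 - 0::real) * (e * (norm h)\<^sup>2)"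
      by (intro vector_differentiable_bound_linearization[where S="{0..1}"])
        (auto simp: closed_segment_eq_real_ivl)
    then show "norm (G (z0 + h) - G z0 - G' z0 h - (1/2) *\<^sub>R B h h) \<le> e * (norm h)\<^sup>2"
      unfolding f_def f'_def by (simp add: algebra_simps)
  qed
qed

lemma second_order_expansion_scaled_remainder:
  assumes exp: "second_order_expansion G A B z"
    and t: "\<And>k. t k > 0" "t \<longlonglongrightarrow> 0" and bound: "\<And>k. norm (u k) \<le> C"
  shows "(\<lambda>k. (1 / (t k)\<^sup>2) *\<^sub>R (G (z + t k *\<^sub>R u k) - G z - A (t k *\<^sub>R u k)
                   - (1/2) *\<^sub>R B (t k *\<^sub>R u k) (t k *\<^sub>R u k))) \<longlonglongrightarrow> 0"
proof (rule LIMSEQ_I)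
  fix r :: real assume "r > 0"
  have "C \<ge> 0" using bound norm_ge_zero order_trans by blast
  define e where "e = r / (C\<^sup>2 + 1)"
  have "e > 0" "e * C\<^sup>2 < r"
    using \<open>r > 0\<close> by (auto simp: e_def field_simps add_pos_nonneg)
  obtain d where "d > 0" and d: "\<And>h. norm h < d \<Longrightarrow>
      norm (G (z + h) - G z - A h - (1/2) *\<^sub>R B h h) \<le> e * (norm h)\<^sup>2"
    using exp \<open>e > 0\<close> unfolding second_order_expansion_def by blast
  have "(\<lambda>k. t k * C) \<longlonglongrightarrow> 0 * C" by (intro tendsto_intros t)
  then obtain N where N: "\<And>k. k \<ge> N \<Longrightarrow> t k * C < d"
    using \<open>d > 0\<close> \<open>C \<ge> 0\<close> t(1) by (fastforce dest: LIMSEQ_D)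
  show "\<exists>N. \<forall>k\<ge>N. norm ((1 / (t k)\<^sup>2) *\<^sub>R (G (z + t k *\<^sub>R u k) - G z - A (t k *\<^sub>R u k)
                   - (1/2) *\<^sub>R B (t k *\<^sub>R u k) (t k *\<^sub>R u k)) - 0) < r"
  proof (intro exI allI impI)
    fix k assume "k \<ge> N"
    have tu: "norm (t k *\<^sub>R u k) \<le> t k * C"
      using bound t(1)[of k] by (simp add: mult_left_mono less_imp_le)
    have "norm (G (z + t k *\<^sub>R u k) - G z - A (t k *\<^sub>R u k) - (1/2) *\<^sub>R B (t k *\<^sub>R u k) (t k *\<^sub>R u k))
        \<le> e * (norm (t k *\<^sub>R u k))\<^sup>2"
      using tu N[OF \<open>k \<ge> N\<close>] by (intro d) linarith
    also have "\<dots> \<le> e * (t k * C)\<^sup>2"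
      using tu \<open>e > 0\<close> by (intro mult_left_mono power_mono) auto
    also have "\<dots> < r * (t k)\<^sup>2"
      using \<open>e * C\<^sup>2 < r\<close> t(1)[of k] by (simp add: power_mult_distrib)
    finally show "norm ((1 / (t k)\<^sup>2) *\<^sub>R (G (z + t k *\<^sub>R u k) - G z - A (t k *\<^sub>R u k)
                   - (1/2) *\<^sub>R B (t k *\<^sub>R u k) (t k *\<^sub>R u k)) - 0) < r"
      using t(1)[of k] by (simp add: divide_less_eq mult.commute)
  qed
qed

lemma second_order_expansion_difference_quotient:
  assumes exp: "second_order_expansion G A B z"
    and t: "\<And>k. t k > 0" "t \<longlonglongrightarrow> 0" and w: "u \<longlonglongrightarrow> w"
  shows "(\<lambda>k. (1 / t k) *\<^sub>R ((1 / t k) *\<^sub>R (G (z + t k *\<^sub>R (v + t k *\<^sub>R u k)) - G z) - A v))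
           \<longlonglongrightarrow> A w + (1/2) *\<^sub>R B v v"
proof -
  define x where "x k = v + t k *\<^sub>R u k" for k
  have "x \<longlonglongrightarrow> v + 0 *\<^sub>R w"
    unfolding x_def by (intro tendsto_intros t w)
  then have x: "x \<longlonglongrightarrow> v" by simp
  then obtain C where "\<And>k. norm (x k) \<le> C"
    using Bseq_def convergent_imp_Bseq convergentI less_imp_le by metis
  then have remainder: "(\<lambda>k. (1 / (t k)\<^sup>2) *\<^sub>R (G (z + t k *\<^sub>R x k) - G z - A (t k *\<^sub>R x k)
                   - (1/2) *\<^sub>R B (t k *\<^sub>R x k) (t k *\<^sub>R x k))) \<longlonglongrightarrow> 0"
    by (rule second_order_expansion_scaled_remainder[OF exp t])
  have "(1 / t k) *\<^sub>R ((1 / t k) *\<^sub>R (G (z + t k *\<^sub>R x k) - G z) - A v)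
      = A (u k) + (1/2) *\<^sub>R B (x k) (x k) + (1 / (t k)\<^sup>2) *\<^sub>R (G (z + t k *\<^sub>R x k) - G z
          - A (t k *\<^sub>R x k) - (1/2) *\<^sub>R B (t k *\<^sub>R x k) (t k *\<^sub>R x k))" for k
    using t(1)[of k] unfolding x_def
    by (simp add: blinfun.scaleR_right blinfun.scaleR_left blinfun.add_right blinfun.add_left
        algebra_simps power2_eq_square)
  moreover have "(\<lambda>k. A (u k) + (1/2) *\<^sub>R B (x k) (x k) + (1 / (t k)\<^sup>2) *\<^sub>R (G (z + t k *\<^sub>R x k) - G z
          - A (t k *\<^sub>R x k) - (1/2) *\<^sub>R B (t k *\<^sub>R x k) (t k *\<^sub>R x k))) \<longlonglongrightarrow> A w + (1/2) *\<^sub>R B v v + 0"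
    by (intro tendsto_intros blinfun.tendsto w x remainder)
  ultimately show ?thesis unfolding x_def by simp
qed

lemma tangent_cone_of_feasible_second_order_sequence:
  assumes "cone K" and exp: "second_order_expansion G A B z" and "G z = 0"
    and t: "\<And>k. t k > 0" "t \<longlonglongrightarrow> 0" and u: "u \<longlonglongrightarrow> w"
    and feasible: "\<And>k. G (z + t k *\<^sub>R (v + t k *\<^sub>R u k)) \<in> K"
  shows "A w + (1/2) *\<^sub>R B v v \<in> tangent_cone K (A v)"
proof -
  define d where "d k = (1 / t k) *\<^sub>R ((1 / t k) *\<^sub>R (G (z + t k *\<^sub>R (v + t k *\<^sub>R u k)) - G z) - A v)" for k
  have "d \<longlonglongrightarrow> A w + (1/2) *\<^sub>R B v v"
    unfolding d_def by (rule second_order_expansion_difference_quotient[OF exp t u])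
  moreover have "A v + t k *\<^sub>R d k \<in> K" for k
  proof -
    have "A v + t k *\<^sub>R d k = (1 / t k) *\<^sub>R G (z + t k *\<^sub>R (v + t k *\<^sub>R u k))"
      using t(1)[of k] \<open>G z = 0\<close> by (simp add: d_def)
    then show ?thesis
      using \<open>cone K\<close> feasible t(1)[of k] unfolding cone_def by simp
  qed
  ultimately show ?thesis
    unfolding tangent_cone_def using t by blast
qed

lemma infdist_bound_imp_close_point:
  assumes bound: "\<forall>z\<in>ball z0 \<epsilon>. infdist z (G -` K) \<le> \<kappa> * infdist (G z) K"
    and "G -` K \<noteq> {}" "z \<in> ball z0 \<epsilon>" "e > 0"
  obtains y where "G y \<in> K" "dist z y < \<kappa> * infdist (G z) K + e"
proof -
  have "(INF y\<in>G -` K. dist z y) < \<kappa> * infdist (G z) K + e"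
    using bound \<open>z \<in> ball z0 \<epsilon>\<close> \<open>e > 0\<close> infdist_notempty[OF \<open>G -` K \<noteq> {}\<close>] by fastforce
  then show ?thesis
    using that cINF_less_iff[OF \<open>G -` K \<noteq> {}\<close> bdd_below_image_dist] by auto
qed

lemma tangent_coneE_eventually:
  assumes "x \<in> tangent_cone K y" and "\<forall>\<^sub>F s in at_right 0. P s"
  obtains t d where "\<And>k. t k > 0" "t \<longlonglongrightarrow> 0" "d \<longlonglongrightarrow> x" "\<And>k. y + t k *\<^sub>R d k \<in> K" "\<And>k. P (t k)"
proof -
  obtain t d where t: "\<And>k. t k > 0" "t \<longlonglongrightarrow> 0" and "d \<longlonglongrightarrow> x" and K: "\<And>k. y + t k *\<^sub>R d k \<in> K"
    using assms(1) unfolding tangent_cone_def by blast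
  have "filterlim t (at_right 0) sequentially"
    using t by (intro tendsto_imp_filterlim_at_right) auto
  then obtain N where "\<And>k. k \<ge> N \<Longrightarrow> P (t k)"
    using assms(2) unfolding filterlim_iff eventually_sequentially by blast
  then show ?thesis
    using that[of "\<lambda>k. t (k + N)" "\<lambda>k. d (k + N)"] t K
      LIMSEQ_ignore_initial_segment[OF t(2)] LIMSEQ_ignore_initial_segment[OF \<open>d \<longlonglongrightarrow> x\<close>]
    by simp
qed

lemma second_order_coordinates:
  assumes "t > 0" and "dist (z + t *\<^sub>R (v + t *\<^sub>R w)) y \<le> t\<^sup>2 * c"
  obtains u where "y = z + t *\<^sub>R (v + t *\<^sub>R u)" "norm (u - w) \<le> c"
proof
  define u where "u = (1 / t\<^sup>2) *\<^sub>R (y - z - t *\<^sub>R v)"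
  show y: "y = z + t *\<^sub>R (v + t *\<^sub>R u)"
    using \<open>t > 0\<close> by (simp add: u_def scaleR_add_right power2_eq_square)
  have "y - (z + t *\<^sub>R (v + t *\<^sub>R w)) = t\<^sup>2 *\<^sub>R (u - w)"
    by (subst y) (simp add: scaleR_diff_right scaleR_add_right power2_eq_square)
  then have "t\<^sup>2 * norm (u - w) \<le> t\<^sup>2 * c"
    using assms(2) by (simp add: dist_norm norm_minus_commute)
  then show "norm (u - w) \<le> c"
    using mult_le_cancel_left_pos[of "t\<^sup>2"] \<open>t > 0\<close> by simp
qed

lemma metric_subregularity_feasible_second_order_sequence:
  assumes "cone K" and exp: "second_order_expansion G A B z" and "G z = 0"
    and "\<kappa> \<ge> 0" "\<epsilon> > 0"
    and subreg: "\<forall>y\<in>ball z \<epsilon>. infdist y (G -` K) \<le> \<kappa> * infdist (G y) K"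
    and tangent: "A w + (1/2) *\<^sub>R B v v + q \<in> tangent_cone K (A v)"
  obtains t u b where "\<And>k. t k > 0" "t \<longlonglongrightarrow> 0" "b \<longlonglongrightarrow> \<kappa> * norm q"
    "\<And>k. norm (u k - w) \<le> b k" "\<And>k. G (z + t k *\<^sub>R (v + t k *\<^sub>R u k)) \<in> K"
proof -
  define p where "p s = z + s *\<^sub>R (v + s *\<^sub>R w)" for s
  have "(p \<longlongrightarrow> p 0) (at_right 0)"
    unfolding p_def by (intro tendsto_intros)
  moreover have "p 0 \<in> ball z \<epsilon>"
    using \<open>\<epsilon> > 0\<close> by (simp add: p_def)
  ultimately have "\<forall>\<^sub>F s in at_right 0. p s \<in> ball z \<epsilon>"
    by (rule topological_tendstoD[OF _ open_ball])
  with tangent obtain t d where t: "\<And>k. t k > 0" "t \<longlonglongrightarrow> 0"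
    and d: "d \<longlonglongrightarrow> A w + (1/2) *\<^sub>R B v v + q" and dK: "\<And>k. A v + t k *\<^sub>R d k \<in> K"
    and near: "\<And>k. p (t k) \<in> ball z \<epsilon>"
    by (rule tangent_coneE_eventually) blast
  have "0 \<in> K"
    using \<open>cone K\<close> dK[of 0] unfolding cone_def by (metis order_refl scaleR_zero_left)
  then have "G -` K \<noteq> {}"
    using \<open>G z = 0\<close> by auto
  \<comment> \<open>\<open>E k\<close> is the violation of the second-order condition at \<open>p (t k)\<close>, measured against the feasible \<open>d k\<close>.\<close>
  define E where "E k = (1 / t k) *\<^sub>R ((1 / t k) *\<^sub>R (G (p (t k)) - G z) - A v) - d k" for k
  have "(\<lambda>k. (1 / t k) *\<^sub>R ((1 / t k) *\<^sub>R (G (p (t k)) - G z) - A v)) \<longlonglongrightarrow> A w + (1/2) *\<^sub>R B v v"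
    unfolding p_def by (rule second_order_expansion_difference_quotient[OF exp t tendsto_const])
  from tendsto_diff[OF this d] have E: "E \<longlonglongrightarrow> - q"
    unfolding E_def by simp
  have violation: "infdist (G (p (t k))) K \<le> (t k)\<^sup>2 * norm (E k)" for k
  proof -
    have "t k *\<^sub>R (A v + t k *\<^sub>R d k) \<in> K"
      using \<open>cone K\<close> dK t(1)[of k] unfolding cone_def by simp
    then have "infdist (G (p (t k))) K \<le> dist (G (p (t k))) (t k *\<^sub>R (A v + t k *\<^sub>R d k))"
      by (rule infdist_le)
    also have "G (p (t k)) - t k *\<^sub>R (A v + t k *\<^sub>R d k) = (t k)\<^sup>2 *\<^sub>R E k"
      using t(1)[of k] \<open>G z = 0\<close> by (simp add: E_def scaleR_diff_right scaleR_add_right power2_eq_square)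
    then have "dist (G (p (t k))) (t k *\<^sub>R (A v + t k *\<^sub>R d k)) = (t k)\<^sup>2 * norm (E k)"
      by (simp add: dist_norm)
    finally show ?thesis .
  qed
  have "\<exists>y. G y \<in> K \<and> dist (p (t k)) y < \<kappa> * infdist (G (p (t k))) K + (t k)^3" for k
    using infdist_bound_imp_close_point[OF subreg \<open>G -` K \<noteq> {}\<close> near zero_less_power[OF t(1)]] by blast
  then obtain y where yK: "\<And>k. G (y k) \<in> K"
    and y: "\<And>k. dist (p (t k)) (y k) < \<kappa> * infdist (G (p (t k))) K + (t k)^3"
    by metis
  have close: "dist (p (t k)) (y k) \<le> (t k)\<^sup>2 * (\<kappa> * norm (E k) + t k)" for k
  proof -
    have "dist (p (t k)) (y k) < \<kappa> * infdist (G (p (t k))) K + (t k)^3"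
      by (rule y)
    also have "\<dots> \<le> \<kappa> * ((t k)\<^sup>2 * norm (E k)) + (t k)^3"
      using violation \<open>\<kappa> \<ge> 0\<close> by (intro add_right_mono mult_left_mono)
    also have "\<dots> = (t k)\<^sup>2 * (\<kappa> * norm (E k) + t k)"
      by (simp add: algebra_simps power2_eq_square power3_eq_cube)
    finally show ?thesis by simp
  qed
  have "\<exists>u. y k = z + t k *\<^sub>R (v + t k *\<^sub>R u) \<and> norm (u - w) \<le> \<kappa> * norm (E k) + t k" for k
    using second_order_coordinates[OF t(1) close[unfolded p_def]] by metis
  then obtain u where y_eq: "\<And>k. y k = z + t k *\<^sub>R (v + t k *\<^sub>R u k)"
    and u: "\<And>k. norm (u k - w) \<le> \<kappa> * norm (E k) + t k"
    by metis
  have "(\<lambda>k. \<kappa> * norm (E k) + t k) \<longlonglongrightarrow> \<kappa> * norm (- q) + 0"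
    by (intro tendsto_intros E t(2))
  then show ?thesis
    using that[OF t _ u] yK y_eq by simp
qed

lemma bounded_dist_imp_convergent_subsequence:
  fixes u :: "nat \<Rightarrow> 'a::{heine_borel,real_normed_vector}"
  assumes dist: "\<And>k. norm (u k - w) \<le> b k" and b: "b \<longlonglongrightarrow> \<beta>"
  obtains \<sigma> w' where "strict_mono \<sigma>" "(u \<circ> \<sigma>) \<longlonglongrightarrow> w'" "norm (w' - w) \<le> \<beta>"
proof -
  obtain C where "\<And>k. norm (b k) \<le> C"
    using Bseq_def convergent_imp_Bseq convergentI[OF b] less_imp_le by metis
  then have "norm (u k) \<le> norm w + C" for k
    using dist[of k] norm_triangle_sub[of "u k" w] by (smt (verit) real_norm_def)
  then have "bounded (range u)"
    unfolding bounded_iff by blast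
  then obtain \<sigma> w' where \<sigma>: "strict_mono \<sigma>" and u: "(u \<circ> \<sigma>) \<longlonglongrightarrow> w'"
    using bounded_imp_convergent_subsequence by blast
  have "(\<lambda>k. norm (u (\<sigma> k) - w)) \<longlonglongrightarrow> norm (w' - w)"
    using u by (intro tendsto_intros) (simp add: comp_def)
  moreover have "(\<lambda>k. b (\<sigma> k)) \<longlonglongrightarrow> \<beta>"
    using LIMSEQ_subseq_LIMSEQ[OF b \<sigma>] by (simp add: comp_def)
  ultimately have "norm (w' - w) \<le> \<beta>"
    using dist by (intro LIMSEQ_le) auto
  with \<sigma> u that show ?thesis by blast
qed

theorem proposition3p1:
  fixes G :: "'z::euclidean_space \<Rightarrow> 'e::euclidean_space"
    and G' :: "'z \<Rightarrow> ('z \<Rightarrow>\<^sub>L 'e)"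
    and G'' :: "'z \<Rightarrow> ('z \<Rightarrow>\<^sub>L ('z \<Rightarrow>\<^sub>L 'e))"
    and K :: "'e set" and zbar v :: 'z
  assumes K: "closed K" "convex K" "cone K"
    and C2: "\<exists>\<delta>>0. (\<forall>z\<in>ball zbar \<delta>. (G has_derivative blinfun_apply (G' z)) (at z)
                 \<and> (G' has_derivative blinfun_apply (G'' z)) (at z))
               \<and> continuous_on (ball zbar \<delta>) G''"
    and G0: "G zbar = 0"
    and mscq: "MSCQ G K zbar"
    and v: "G' zbar v \<in> K"
  shows "\<exists>\<kappa>>0. \<forall>w q.
           G' zbar w + (1/2) *\<^sub>R (G'' zbar v v) + q \<in> tangent_cone K (G' zbar v) \<longrightarrow>
           (\<exists>w'. G' zbar w' + (1/2) *\<^sub>R (G'' zbar v v) \<in> tangent_cone K (G' zbar v)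
                 \<and> norm (w' - w) \<le> \<kappa> * norm q)"
proof -
  obtain \<delta> where "\<delta> > 0" and derivs: "\<forall>z\<in>ball zbar \<delta>. (G has_derivative blinfun_apply (G' z)) (at z)
                 \<and> (G' has_derivative blinfun_apply (G'' z)) (at z)"
    using C2 by blast
  then have exp: "second_order_expansion G (G' zbar) (G'' zbar) zbar"
    by (intro has_derivative_imp_second_order_expansion[of \<delta>]) auto
  obtain \<kappa> \<epsilon> where "\<kappa> \<ge> 0" "\<epsilon> > 0" and subreg: "\<forall>z\<in>ball zbar \<epsilon>. infdist z (G -` K) \<le> \<kappa> * infdist (G z) K"
    using mscq unfolding MSCQ_def by blast
  show ?thesis
  proof (intro exI[of _ "\<kappa> + 1"] conjI allI impI)
    fix w q
    assume "G' zbar w + (1/2) *\<^sub>R (G'' zbar v v) + q \<in> tangent_cone K (G' zbar v)"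
    then obtain t u b where t: "\<And>k. t k > 0" "t \<longlonglongrightarrow> 0" and b: "b \<longlonglongrightarrow> \<kappa> * norm q"
      and dist: "\<And>k. norm (u k - w) \<le> b k" and feasible: "\<And>k. G (zbar + t k *\<^sub>R (v + t k *\<^sub>R u k)) \<in> K"
      by (rule metric_subregularity_feasible_second_order_sequence[OF K(3) exp G0 \<open>\<kappa> \<ge> 0\<close> \<open>\<epsilon> > 0\<close> subreg]) blast
    obtain \<sigma> w' where \<sigma>: "strict_mono \<sigma>" and "(u \<circ> \<sigma>) \<longlonglongrightarrow> w'" and "norm (w' - w) \<le> \<kappa> * norm q"
      by (rule bounded_dist_imp_convergent_subsequence[OF dist b])
    moreover have "(t \<circ> \<sigma>) \<longlonglongrightarrow> 0"
      using LIMSEQ_subseq_LIMSEQ[OF t(2) \<sigma>] .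
    moreover have "(t \<circ> \<sigma>) k > 0" "G (zbar + (t \<circ> \<sigma>) k *\<^sub>R (v + (t \<circ> \<sigma>) k *\<^sub>R (u \<circ> \<sigma>) k)) \<in> K" for k
      using t(1) feasible by simp_all
    ultimately have "G' zbar w' + (1/2) *\<^sub>R (G'' zbar v v) \<in> tangent_cone K (G' zbar v)"
      by (intro tangent_cone_of_feasible_second_order_sequence[OF K(3) exp G0, of "t \<circ> \<sigma>" "u \<circ> \<sigma>"])
    moreover have "norm (w' - w) \<le> (\<kappa> + 1) * norm q"
      using \<open>norm (w' - w) \<le> \<kappa> * norm q\<close> by (simp add: distrib_right add_increasing2)
    ultimately show "\<exists>w'. G' zbar w' + (1/2) *\<^sub>R (G'' zbar v v) \<in> tangent_cone K (G' zbar v)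
                 \<and> norm (w' - w) \<le> (\<kappa> + 1) * norm q"
      by blast
  qed (use \<open>\<kappa> \<ge> 0\<close> in simp)
qed

end
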